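(* Let $G$ be the $2\times n$ square lattice graph $P_2\times P_n$ with $n>2$. Then $T_1(G)=3$.
   Context: $P_2\times P_n$ is the Cartesian product of paths on $2$ and $n$ vertices. Fix a set $\Sigma$ of symbols (bond-edge types) and a disjoint copy $\hat\Sigma=\{\hat a:a\in\Sigma\}$ with $\hat{\hat a}=a$; elements of $\Sigma\cup\hat\Sigma$ are cohesive-end types. A tile is a finite multiset of cohesive-end types. A pot is a finite set $P$ of tiles such that whenever $x$ occurs in a tile of $P$, $\hat x$ occurs in some tile of $P$; $\#P$ is its number of tiles. Graphs are finite, loops and multiple edges allowed. An assembly design of a graph $H$ labels the half-edges of $H$ by cohesive-end types so that the two half-edges of each edge receive complementary labels $x,\hat x$; $t_v$ is the multiset of labels at $v$, $P_\lambda(H)=\{t_v\}$, and $P$ realizes $H$ ($H\in\mathcal{O}(P)$) if some assembly design $\lambda$ has $P_\lambda(H)\subseteq P$. $T_1(G)=\min\{\#P: G\in\mathcal{O}(P)\}$. *)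

theory Defs
  imports Main "HOL-Library.Multiset"
begin

text \<open>Cohesive-end types over the bond-edge symbol set Sigma = UNIV :: nat set:
  Plain a stands for a, Hat a for the complementary type.\<close>
datatype cend = Plain nat | Hat nat

fun hat :: "cend \<Rightarrow> cend" where
  "hat (Plain a) = Hat a"
| "hat (Hat a) = Plain a"

type_synonym tile = "cend multiset"

definition is_pot :: "tile set \<Rightarrow> bool" where
  "is_pot P \<longleftrightarrow> finite P \<and>
     (\<forall>t\<in>P. \<forall>x. x \<in># t \<longrightarrow> (\<exists>t'\<in>P. hat x \<in># t'))"

text \<open>Finite multigraphs (loops and multiple edges allowed): edges are identifiers
  with an ordered pair of endpoints. Each edge e has two half-edges: (e, True) at
  fst (ends e) and (e, False) at snd (ends e).\<close>
record ('v, 'e) mgraph =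
  verts :: "'v set"
  edges :: "'e set"
  ends  :: "'e \<Rightarrow> 'v \<times> 'v"

definition wf_mgraph :: "('v, 'e) mgraph \<Rightarrow> bool" where
  "wf_mgraph H \<longleftrightarrow> finite (verts H) \<and> finite (edges H) \<and>
     (\<forall>e\<in>edges H. fst (ends H e) \<in> verts H \<and> snd (ends H e) \<in> verts H)"

definition assembly_design :: "('v, 'e) mgraph \<Rightarrow> ('e \<Rightarrow> bool \<Rightarrow> cend) \<Rightarrow> bool" where
  "assembly_design H lam \<longleftrightarrow> (\<forall>e\<in>edges H. lam e False = hat (lam e True))"

definition tile_at :: "('v, 'e) mgraph \<Rightarrow> ('e \<Rightarrow> bool \<Rightarrow> cend) \<Rightarrow> 'v \<Rightarrow> tile" where
  "tile_at H lam v = (\<Sum>e\<in>edges H.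
      (if fst (ends H e) = v then {#lam e True#} else {#}) +
      (if snd (ends H e) = v then {#lam e False#} else {#}))"

definition pot_of :: "('v, 'e) mgraph \<Rightarrow> ('e \<Rightarrow> bool \<Rightarrow> cend) \<Rightarrow> tile set" where
  "pot_of H lam = tile_at H lam ` verts H"

definition realizes :: "tile set \<Rightarrow> ('v, 'e) mgraph \<Rightarrow> bool" where
  "realizes P H \<longleftrightarrow> (\<exists>lam. assembly_design H lam \<and> pot_of H lam \<subseteq> P)"

definition T1 :: "('v, 'e) mgraph \<Rightarrow> nat" where
  "T1 H = (LEAST k. \<exists>P. is_pot P \<and> realizes P H \<and> card P = k)"

definition ladder :: "nat \<Rightarrow> (nat \<times> nat, (nat \<times> nat) \<times> (nat \<times> nat)) mgraph" where
  "ladder n = \<lparr> verts = {(i, j). i < 2 \<and> j < n},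
     edges = {((i, j), (i', j')). i < 2 \<and> j < n \<and> i' < 2 \<and> j' < n \<and>
                ((i = i' \<and> j' = j + 1) \<or> (j = j' \<and> i = 0 \<and> i' = 1))},
     ends = id \<rparr>"

end

theory Submission
  imports Defs
begin

text \<open>
  Lower bound: a corner tile and an interior tile have sizes 2 and 3, so a pot of two tiles
  consists of exactly these. The rung at the end joins two corners, so the corner tile is
  {y, hat y} and has charge 0, where the charge of a tile at a symbol a counts a minus hat a.
  Each edge carries a and hat a equally often, so the charges of all tiles sum to 0; this
  forces the interior tile to have charge 0 as well, but a tile of charge 0 has even size.

  Upper bound: label each half-edge by the checkerboard colour (a or hat a) of its vertex,
  flipping the labels on the two end rungs. Interior vertices then carry a^3 or (hat a)^3,
  and corners carry {a, hat a}.
\<close>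

lemma hat_neq [simp]: "hat x \<noteq> x" "x \<noteq> hat x"
  by (cases x; simp)+

lemma mset_eq_pair_if_size_2:
  assumes "size M = 2" "x \<in># M" "y \<in># M" "x \<noteq> y"
  shows "M = {#x, y#}"
proof -
  have sub: "{#x, y#} \<subseteq># M"
    using assms(2-4) by (simp add: insert_subset_eq_iff in_diff_count)
  then have "size (M - {#x, y#}) = 0"
    using assms(1) by (simp add: size_Diff_submset)
  then show ?thesis
    using sub by (metis size_eq_0_iff_empty subset_mset.diff_add add_0)
qed

lemma eq_pair_if_card_less_3:
  assumes "finite P" "card P < 3" "x \<in> P" "y \<in> P" "x \<noteq> y"
  shows "P = {x, y}"
proof -
  have sub: "{x, y} \<subseteq> P"
    using assms by simp
  moreover have "card {x, y} = card P"
    using assms card_mono[OF assms(1) sub] by simp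
  ultimately show ?thesis
    by (rule card_subset_eq[OF assms(1), symmetric])
qed

lemma T1_eqI:
  assumes "is_pot P" "realizes P H" "card P = k"
    and "\<And>Q. is_pot Q \<Longrightarrow> realizes Q H \<Longrightarrow> k \<le> card Q"
  shows "T1 H = k"
  unfolding T1_def using assms by (intro Least_equality) auto

lemma set_mset_tile_at:
  assumes "finite (edges H)"
  shows "set_mset (tile_at H lam v) =
      {lam e True | e. e \<in> edges H \<and> fst (ends H e) = v} \<union>
      {lam e False | e. e \<in> edges H \<and> snd (ends H e) = v}"
  unfolding tile_at_def using assms by (auto simp: set_mset_sum split: if_splits)

lemma size_tile_at:
  assumes "finite (edges H)"
  shows "size (tile_at H lam v) =
      card {e \<in> edges H. fst (ends H e) = v} + card {e \<in> edges H. snd (ends H e) = v}"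
proof -
  have "size (tile_at H lam v) =
      (\<Sum>e\<in>edges H. if fst (ends H e) = v then 1 else 0) +
      (\<Sum>e\<in>edges H. if snd (ends H e) = v then 1 else 0)"
    unfolding tile_at_def size_multiset_sum sum.distrib[symmetric] by (intro sum.cong) auto
  then show ?thesis
    using assms by (simp add: sum.inter_filter[symmetric])
qed

lemma sum_tile_at:
  assumes "wf_mgraph H"
  shows "(\<Sum>v\<in>verts H. tile_at H lam v) = (\<Sum>e\<in>edges H. {#lam e True, lam e False#})"
proof -
  have "(\<Sum>v\<in>verts H. tile_at H lam v) =
      (\<Sum>e\<in>edges H. \<Sum>v\<in>verts H.
        (if fst (ends H e) = v then {#lam e True#} else {#}) +
        (if snd (ends H e) = v then {#lam e False#} else {#}))"
    unfolding tile_at_def by (rule sum.swap)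
  also have "\<dots> = (\<Sum>e\<in>edges H. {#lam e True, lam e False#})"
    using assms by (intro sum.cong refl) (auto simp: wf_mgraph_def sum.distrib)
  finally show ?thesis .
qed

lemma label_in_tile_at_fst:
  "finite (edges H) \<Longrightarrow> e \<in> edges H \<Longrightarrow> lam e True \<in># tile_at H lam (fst (ends H e))"
  by (auto simp: set_mset_tile_at)

lemma label_in_tile_at_snd:
  "finite (edges H) \<Longrightarrow> e \<in> edges H \<Longrightarrow> lam e False \<in># tile_at H lam (snd (ends H e))"
  by (auto simp: set_mset_tile_at)

definition charge :: "nat \<Rightarrow> tile \<Rightarrow> int" where
  "charge a t = int (count t (Plain a)) - int (count t (Hat a))"

lemma charge_add: "charge a (s + t) = charge a s + charge a t"
  by (simp add: charge_def)

lemma charge_sum: "charge a (sum f A) = (\<Sum>x\<in>A. charge a (f x))"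
  by (simp add: charge_def count_sum sum_subtractf of_nat_sum)

lemma charge_pair_hat: "charge a {#x, hat x#} = 0"
  by (cases x) (auto simp: charge_def)

lemma charge_eq_0_if_edge_joins_equal_tiles:
  assumes "finite (edges H)" "assembly_design H lam" "e \<in> edges H"
    and "tile_at H lam (fst (ends H e)) = t" "tile_at H lam (snd (ends H e)) = t" "size t = 2"
  shows "charge a t = 0"
proof -
  have "lam e True \<in># t" "hat (lam e True) \<in># t"
    using assms label_in_tile_at_fst[OF assms(1,3), of lam] label_in_tile_at_snd[OF assms(1,3), of lam]
    by (auto simp: assembly_design_def)
  then have "t = {#lam e True, hat (lam e True)#}"
    by (rule mset_eq_pair_if_size_2[OF assms(6)]) simp
  then show ?thesis
    by (simp add: charge_pair_hat)
qed

lemma sum_charge_tile_at_eq_0: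
  assumes "wf_mgraph H" "assembly_design H lam"
  shows "(\<Sum>v\<in>verts H. charge a (tile_at H lam v)) = 0"
proof -
  have "(\<Sum>v\<in>verts H. charge a (tile_at H lam v)) = (\<Sum>e\<in>edges H. charge a {#lam e True, lam e False#})"
    using sum_tile_at[OF assms(1)] by (metis charge_sum)
  also have "\<dots> = 0"
    using assms(2) by (intro sum.neutral) (auto simp: assembly_design_def charge_pair_hat)
  finally show ?thesis .
qed

lemma even_size_if_charge_eq_0:
  assumes "\<And>a. charge a t = 0"
  shows "even (size t)"
  using assms
proof (induction "size t" arbitrary: t rule: less_induct)
  case less
  show ?case
  proof (cases "t = {#}")
    case False
    then obtain x where x: "x \<in># t"
      by blast
    moreover have "hat x \<in># t"
      using less.prems[of "case x of Plain a \<Rightarrow> a | Hat a \<Rightarrow> a"] x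
      by (cases x) (simp_all add: charge_def flip: count_greater_zero_iff)
    ultimately have "{#x, hat x#} \<subseteq># t"
      by (simp add: insert_subset_eq_iff in_diff_count)
    then have t_eq: "t = (t - {#x, hat x#}) + {#x, hat x#}"
      by (metis subset_mset.diff_add)
    have "even (size (t - {#x, hat x#}))"
    proof (rule less.hyps)
      show "size (t - {#x, hat x#}) < size t"
        by (subst (2) t_eq) simp
      show "charge a (t - {#x, hat x#}) = 0" for a
      proof -
        have "charge a t = charge a (t - {#x, hat x#}) + charge a {#x, hat x#}"
          by (subst (1) t_eq) (rule charge_add)
        then show ?thesis
          using less.prems[of a] by (simp add: charge_pair_hat)
      qed
    qed
    then show ?thesis
      by (subst t_eq) simp
  qed simp
qed

lemma charge_eq_0_if_other_tiles_charge_0: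
  assumes "wf_mgraph H" "assembly_design H lam" "v \<in> verts H"
    and "\<And>u. u \<in> verts H \<Longrightarrow> tile_at H lam u \<noteq> tile_at H lam v \<Longrightarrow> charge a (tile_at H lam u) = 0"
  shows "charge a (tile_at H lam v) = 0"
proof -
  let ?t = "tile_at H lam v"
  let ?U = "{u \<in> verts H. tile_at H lam u = ?t}"
  have fin: "finite (verts H)"
    using assms(1) by (simp add: wf_mgraph_def)
  have "0 = (\<Sum>u\<in>verts H. charge a (tile_at H lam u))"
    using sum_charge_tile_at_eq_0[OF assms(1,2)] by simp
  also have "\<dots> = (\<Sum>u\<in>verts H. if tile_at H lam u = ?t then charge a ?t else 0)"
    using assms(4) by (intro sum.cong) auto
  also have "\<dots> = int (card ?U) * charge a ?t"
    using fin by (simp add: sum.inter_filter[symmetric])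
  finally have "int (card ?U) * charge a ?t = 0" ..
  moreover have "card ?U > 0"
    using fin assms(3) by (auto simp: card_gt_0_iff)
  ultimately show ?thesis
    by simp
qed

lemma ends_ladder [simp]: "ends (ladder n) e = e"
  by (simp add: ladder_def)

lemma mem_verts_ladder [simp]: "(i, j) \<in> verts (ladder n) \<longleftrightarrow> i < 2 \<and> j < n"
  by (simp add: ladder_def)

lemma finite_edges_ladder: "finite (edges (ladder n))"
proof (rule finite_subset)
  show "edges (ladder n) \<subseteq> ({..<2} \<times> {..<n}) \<times> ({..<2} \<times> {..<n})"
    by (auto simp: ladder_def)
qed auto

lemma wf_mgraph_ladder: "wf_mgraph (ladder n)"
proof -
  have "verts (ladder n) = {..<2} \<times> {..<n}"
    by (auto simp: ladder_def)
  then show ?thesis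
    using finite_edges_ladder by (auto simp: wf_mgraph_def ladder_def)
qed

lemma size_tile_at_ladder:
  assumes "2 \<le> n" "i < 2" "j < n"
  shows "size (tile_at (ladder n) lam (i, j)) = (if 0 < j \<and> j < n - 1 then 3 else 2)"
proof -
  have out_edges: "{e \<in> edges (ladder n). fst e = (i, j)} =
      (if j + 1 < n then {((i, j), (i, j + 1))} else {}) \<union> (if i = 0 then {((0, j), (1, j))} else {})"
    using assms by (auto simp: ladder_def split: if_splits)
  have in_edges: "{e \<in> edges (ladder n). snd e = (i, j)} =
      (if 0 < j then {((i, j - 1), (i, j))} else {}) \<union> (if i = 1 then {((0, j), (1, j))} else {})"
    using assms by (auto simp: ladder_def split: if_splits)
  show ?thesis
    unfolding size_tile_at[OF finite_edges_ladder] ends_ladder out_edges in_edges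
    using assms by (cases "i = 0"; cases "j = 0"; cases "j + 1 < n") auto
qed

lemma card_ge_3_if_realizes_ladder:
  assumes "3 \<le> n" "finite P" "realizes P (ladder n)"
  shows "3 \<le> card P"
proof (rule ccontr)
  assume "\<not> 3 \<le> card P"
  obtain lam where design: "assembly_design (ladder n) lam" and "pot_of (ladder n) lam \<subseteq> P"
    using assms(3) by (auto simp: realizes_def)
  let ?t = "tile_at (ladder n) lam"
  have tile_in_P: "?t v \<in> P" if "v \<in> verts (ladder n)" for v
    using \<open>pot_of (ladder n) lam \<subseteq> P\<close> that by (auto simp: pot_of_def)
  have size_corner: "size (?t (0, 0)) = 2" "size (?t (1, 0)) = 2"
    using assms(1) by (simp_all add: size_tile_at_ladder)
  have size_inner: "size (?t (0, 1)) = 3"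
    using assms(1) by (simp add: size_tile_at_ladder)
  have "?t (0, 0) \<in> P" "?t (0, 1) \<in> P"
    using assms(1) tile_in_P by simp_all
  moreover have "?t (0, 0) \<noteq> ?t (0, 1)"
    using size_corner(1) size_inner by auto
  ultimately have P_eq: "P = {?t (0, 0), ?t (0, 1)}"
    using eq_pair_if_card_less_3[OF assms(2)] \<open>\<not> 3 \<le> card P\<close> by simp
  have "?t (1, 0) = ?t (0, 0)"
    using tile_in_P[of "(1, 0)"] size_corner(2) size_inner assms(1) P_eq by auto
  then have corner_charge: "charge a (?t (0, 0)) = 0" for a
    using charge_eq_0_if_edge_joins_equal_tiles[OF finite_edges_ladder design, of "((0, 0), (1, 0))"]
      size_corner(1) assms(1) by (simp add: ladder_def)
  have "charge a (?t (0, 1)) = 0" for a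
  proof (rule charge_eq_0_if_other_tiles_charge_0[OF wf_mgraph_ladder design])
    show "(0, 1) \<in> verts (ladder n)"
      using assms(1) by simp
    show "charge a (?t u) = 0" if "u \<in> verts (ladder n)" "?t u \<noteq> ?t (0, 1)" for u
    proof -
      have "?t u = ?t (0, 0)"
        using tile_in_P[OF that(1)] that(2) P_eq by simp
      then show ?thesis
        by (simp add: corner_charge)
    qed
  qed
  then have "even (size (?t (0, 1)))"
    by (rule even_size_if_charge_eq_0)
  then show False
    using size_inner by simp
qed

definition checkerboard :: "nat \<times> nat \<Rightarrow> cend" where
  "checkerboard v = (if even (fst v + snd v) then Plain 0 else Hat 0)"

definition ladder_label :: "nat \<Rightarrow> (nat \<times> nat) \<times> (nat \<times> nat) \<Rightarrow> nat \<times> nat \<Rightarrow> cend" where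
  "ladder_label n e v =
    (if snd (fst e) = snd (snd e) \<and> \<not> (0 < snd v \<and> snd v < n - 1)
     then hat (checkerboard v) else checkerboard v)"

definition ladder_design :: "nat \<Rightarrow> (nat \<times> nat) \<times> (nat \<times> nat) \<Rightarrow> bool \<Rightarrow> cend" where
  "ladder_design n e b = ladder_label n e (if b then fst e else snd e)"

lemma assembly_design_ladder: "assembly_design (ladder n) (ladder_design n)"
  by (auto simp: assembly_design_def ladder_design_def ladder_label_def checkerboard_def ladder_def)

lemma set_mset_tile_at_ladder_design:
  "set_mset (tile_at (ladder n) (ladder_design n) v) =
    {ladder_label n e v | e. e \<in> edges (ladder n) \<and> (fst e = v \<or> snd e = v)}"
  by (auto simp: set_mset_tile_at[OF finite_edges_ladder] ladder_design_def)

lemma label_in_tile_at_ladder_design: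
  "e \<in> edges (ladder n) \<Longrightarrow> fst e = v \<or> snd e = v \<Longrightarrow> ladder_label n e v \<in># tile_at (ladder n) (ladder_design n) v"
  unfolding set_mset_tile_at_ladder_design by blast

lemma tile_at_ladder_design_inner:
  assumes "i < 2" "0 < j" "j < n - 1"
  shows "tile_at (ladder n) (ladder_design n) (i, j) = replicate_mset 3 (checkerboard (i, j))"
proof -
  have "set_mset (tile_at (ladder n) (ladder_design n) (i, j)) \<subseteq> {checkerboard (i, j)}"
    using assms by (auto simp: set_mset_tile_at_ladder_design ladder_label_def)
  then have "tile_at (ladder n) (ladder_design n) (i, j) =
      replicate_mset (size (tile_at (ladder n) (ladder_design n) (i, j))) (checkerboard (i, j))"
    by (rule set_mset_subset_singletonD)
  then show ?thesis
    using assms by (simp add: size_tile_at_ladder)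
qed

lemma tile_at_ladder_design_end:
  assumes "2 \<le> n" "i < 2" "j < n" "\<not> (0 < j \<and> j < n - 1)"
  shows "tile_at (ladder n) (ladder_design n) (i, j) = {#checkerboard (i, j), hat (checkerboard (i, j))#}"
proof (rule mset_eq_pair_if_size_2)
  show "size (tile_at (ladder n) (ladder_design n) (i, j)) = 2"
    using assms by (simp add: size_tile_at_ladder)
  obtain e where e: "e \<in> edges (ladder n)" "fst e = (i, j) \<or> snd e = (i, j)"
    and "snd (fst e) \<noteq> snd (snd e)"
  proof (cases "j = 0")
    case True
    then show ?thesis
      using assms by (intro that[of "((i, 0), (i, 1))"]) (auto simp: ladder_def)
  next
    case False
    then have "j = n - 1"
      using assms by simp
    then show ?thesis
      using assms by (intro that[of "((i, n - 2), (i, n - 1))"]) (auto simp: ladder_def)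
  qed
  then show "checkerboard (i, j) \<in># tile_at (ladder n) (ladder_design n) (i, j)"
    using label_in_tile_at_ladder_design[OF e] by (simp add: ladder_label_def)
  have rung: "((0, j), (1, j)) \<in> edges (ladder n)" "fst ((0, j), (1, j)) = (i, j) \<or> snd ((0, j), (1, j)) = (i, j)"
    using assms(2,3) by (auto simp: ladder_def less_2_cases_iff)
  show "hat (checkerboard (i, j)) \<in># tile_at (ladder n) (ladder_design n) (i, j)"
    using label_in_tile_at_ladder_design[OF rung] assms(4) by (simp add: ladder_label_def)
qed simp

definition ladder_pot :: "tile set" where
  "ladder_pot = {replicate_mset 3 (Plain 0), replicate_mset 3 (Hat 0), {#Plain 0, Hat 0#}}"

lemma is_pot_ladder_pot: "is_pot ladder_pot"
  by (auto simp: is_pot_def ladder_pot_def)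

lemma card_ladder_pot: "card ladder_pot = 3"
proof -
  have "count t (Plain 0) \<noteq> count t' (Plain 0) \<Longrightarrow> t \<noteq> t'" for t t' :: tile
    by auto
  then show ?thesis
    by (simp add: ladder_pot_def numeral_eq_Suc)
qed

lemma realizes_ladder_pot:
  assumes "2 \<le> n"
  shows "realizes ladder_pot (ladder n)"
  unfolding realizes_def
proof (intro exI conjI)
  show "assembly_design (ladder n) (ladder_design n)"
    by (rule assembly_design_ladder)
  have "tile_at (ladder n) (ladder_design n) (i, j) \<in> ladder_pot" if "i < 2" "j < n" for i j
    using that assms tile_at_ladder_design_inner tile_at_ladder_design_end
    by (cases "0 < j \<and> j < n - 1") (auto simp: ladder_pot_def checkerboard_def add_mset_commute)
  then show "pot_of (ladder n) (ladder_design n) \<subseteq> ladder_pot"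
    by (auto simp: pot_of_def ladder_def)
qed

theorem proposition7:
  fixes n :: nat
  assumes "n > 2"
  shows "T1 (ladder n) = 3"
proof (rule T1_eqI[OF is_pot_ladder_pot _ card_ladder_pot])
  show "realizes ladder_pot (ladder n)"
    using assms by (intro realizes_ladder_pot) simp
  show "3 \<le> card Q" if "is_pot Q" "realizes Q (ladder n)" for Q :: "tile set"
    using assms that by (intro card_ge_3_if_realizes_ladder) (auto simp: is_pot_def)
qed

end
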